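(* Let $\mathcal R(P_n)=u_1,\ldots,u_m$. (1) For $n\geq2$: if $x_n\mid u_i$ for some $i$, then $x_n\mid u_j$ for all $j\geq i$. (2) For $n\geq3$: if $x_{n-2}\mid u_i$ for some $i$, then $x_{n-2}\mid u_j$ for all $j\geq i$. (3) For $n\geq4$: if $\mathcal R(P_{n-2})=v_1,\ldots,v_k$ and $\mathcal R(P_{n-1})=w_1,\ldots,w_\ell$, then $\mathcal R(P_n)=x_{n-1}v_1,\ldots,x_{n-1}v_k,x_nw_1,\ldots,x_nw_\alpha$ for some $\alpha<\ell$.
   Context: For $m\geq 1$, $P_m$ is the path graph on vertices $x_1,\ldots,x_m$ with edges $\{x_i,x_{i+1}\}$. The rooted list $\mathcal R(P_m)$ (a list of the minimal monomial generators of the cover ideal of $P_m$) is defined recursively: $\mathcal R(P_1)$ empty; $\mathcal R(P_2)=x_1,x_2$; $\mathcal R(P_3)=x_2,x_1x_3$; $\mathcal R(P_4)=x_1x_3,x_2x_3,x_2x_4$; for $m\geq5$, if $\mathcal R(P_{m-2})=u_1,\ldots,u_r$ and $\mathcal R(P_{m-3})=v_1,\ldots,v_s$, then $\mathcal R(P_m)=x_{m-1}u_1,\ldots,x_{m-1}u_r,x_mx_{m-2}v_1,\ldots,x_mx_{m-2}v_s$. *)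

theory Defs
  imports Main "HOL-Library.Multiset"
begin

text \<open>Monomials in the variables x_1, x_2, ... are represented as multisets of
variable indices (x_i = {#i#}, product = multiset sum, x_i divides u iff i \<in># u).
The rooted list R(P_m) is a list of monomials.  R 0 is a dummy value ([]).\<close>

fun rooted :: "nat \<Rightarrow> nat multiset list" where
  "rooted 0 = []"
| "rooted (Suc 0) = []"
| "rooted (Suc (Suc 0)) = [{#1#}, {#2#}]"
| "rooted (Suc (Suc (Suc 0))) = [{#2#}, {#1, 3#}]"
| "rooted (Suc (Suc (Suc (Suc 0)))) = [{#1, 3#}, {#2, 3#}, {#2, 4#}]"
| "rooted (Suc (Suc (Suc (Suc (Suc k))))) =
     map (\<lambda>u. {#k + 4#} + u) (rooted (k + 3)) @
     map (\<lambda>v. {#k + 5#} + {#k + 3#} + v) (rooted (k + 2))"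

end

theory Submission
  imports Defs
begin

text \<open>All three statements follow by unfolding the recursion once,
R(P_n) = x_(n-1) R(P_(n-2)), x_n x_(n-2) R(P_(n-3)).  Every variable of R(P_m) has
index at most m, so x_n divides exactly the monomials of the second block, and x_(n-2)
divides all of the second block and, within the first block, follows the pattern of
x_(n-2) in R(P_(n-2)).  For (3), the first block of R(P_(n-1)) is x_(n-2) R(P_(n-3)), so
the second block of R(P_n) is x_n times a proper prefix of R(P_(n-1)).  "Once true,
true from then on" along a list is expressed as sortedness of the list of truth values.\<close>

lemma rooted_add_5:
  "rooted (k + 5) =
     map (\<lambda>u. {#k + 4#} + u) (rooted (k + 3)) @
     map (\<lambda>v. {#k + 5#} + {#k + 3#} + v) (rooted (k + 2))"
proof -
  have "k + 5 = Suc (Suc (Suc (Suc (Suc k))))" by simp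
  then show ?thesis by (simp only: rooted.simps)
qed

lemma rooted_var_le: "u \<in> set (rooted m) \<Longrightarrow> x \<in># u \<Longrightarrow> x \<le> m"
proof (induction m arbitrary: u rule: rooted.induct)
  case (6 k)
  then show ?case by (auto simp: numeral_eq_Suc) (meson le_SucI)+
qed auto

lemma rooted_nonempty: "2 \<le> m \<Longrightarrow> rooted m \<noteq> []"
  by (induction m rule: rooted.induct) auto

lemma sorted_map_bool_iff:
  "sorted (map P xs) \<longleftrightarrow>
     (\<forall>i j. i \<le> j \<longrightarrow> j < length xs \<longrightarrow> P (xs ! i) \<longrightarrow> P (xs ! j))"
  by (auto simp: sorted_iff_nth_mono le_bool_def)

lemma sorted_map_False: "\<forall>x\<in>set xs. \<not> P x \<Longrightarrow> sorted (map P xs)"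
  by (induction xs) auto

lemma sorted_map_append_True:
  "sorted (map P xs) \<Longrightarrow> \<forall>y\<in>set ys. P y \<Longrightarrow> sorted (map P (xs @ ys))"
  by (induction ys) (auto simp: sorted_append)

lemma sorted_rooted_last_var: "2 \<le> n \<Longrightarrow> sorted (map (\<lambda>u. n \<in># u) (rooted n))"
proof -
  assume "2 \<le> n"
  then have "n \<in> {2, 3, 4} \<or> n = (n - 5) + 5" by auto
  then consider "n \<in> {2, 3, 4}" | k where "n = k + 5" by blast
  then show ?thesis
  proof cases
    case 1
    then show ?thesis by (auto simp: numeral_eq_Suc)
  next
    case (2 k)
    have "\<not> k + 5 \<in># u" if "u \<in> set (rooted (k + 3))" for u
      using rooted_var_le[OF that, of "k + 5"] by auto
    then show ?thesis
      unfolding 2 rooted_add_5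
      by (intro sorted_map_append_True sorted_map_False) auto
  qed
qed

lemma sorted_rooted_third_last_var:
  "3 \<le> n \<Longrightarrow> sorted (map (\<lambda>u. n - 2 \<in># u) (rooted n))"
proof -
  assume "3 \<le> n"
  then have "n \<in> {3, 4} \<or> n = (n - 5) + 5" by auto
  then consider "n \<in> {3, 4}" | k where "n = k + 5" by blast
  then show ?thesis
  proof cases
    case 1
    then show ?thesis by (auto simp: numeral_eq_Suc)
  next
    case (2 k)
    have "sorted (map (\<lambda>u. k + 3 \<in># u) (rooted (k + 3)))"
      by (rule sorted_rooted_last_var) simp
    then have first_block:
      "sorted (map (\<lambda>u. k + 3 \<in># u) (map (\<lambda>u. {#k + 4#} + u) (rooted (k + 3))))"
      by (simp add: o_def)
    have "k + 5 - 2 = k + 3" by simp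
    then show ?thesis
      unfolding 2 rooted_add_5 by (simp only:) (intro sorted_map_append_True[OF first_block], auto)
  qed
qed

lemma take_rooted_add_5:
  "take (length (rooted (k + 3))) (rooted (k + 5)) = map (\<lambda>u. {#k + 4#} + u) (rooted (k + 3))"
  by (simp add: rooted_add_5)

lemma rooted_eq_append_take:
  assumes "4 \<le> n"
  shows "\<exists>\<alpha> < length (rooted (n - 1)).
           rooted n = map (\<lambda>v. {#n - 1#} + v) (rooted (n - 2)) @
                      map (\<lambda>w. {#n#} + w) (take \<alpha> (rooted (n - 1)))"
proof -
  have "n = 4 \<or> n = 5 \<or> n = (n - 6) + 6" using assms by arith
  then consider "n = 4" | "n = 5" | k where "n = k + 6" by blast
  then show ?thesis
  proof cases
    case 1
    show ?thesis unfolding 1 by (rule exI[of _ 1]) (simp add: numeral_eq_Suc)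
  next
    case 2
    show ?thesis unfolding 2 by (rule exI[of _ 2]) (simp add: numeral_eq_Suc)
  next
    case (3 k)
    have shift: "k + 1 + 5 = k + 6" "k + 1 + 4 = k + 5" "k + 1 + 3 = k + 4" "k + 1 + 2 = k + 3"
      by simp_all
    have "rooted (k + 6) = map (\<lambda>u. {#k + 5#} + u) (rooted (k + 4)) @
        map (\<lambda>v. {#k + 6#} + {#k + 4#} + v) (rooted (k + 3))"
      using rooted_add_5[of "k + 1"] unfolding shift .
    also have "\<dots> = map (\<lambda>u. {#k + 5#} + u) (rooted (k + 4)) @
        map (\<lambda>w. {#k + 6#} + w) (take (length (rooted (k + 3))) (rooted (k + 5)))"
      by (simp add: take_rooted_add_5 add.assoc)
    finally have "rooted (k + 6) = \<dots>" .
    moreover have "length (rooted (k + 3)) < length (rooted (k + 5))"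
      using rooted_nonempty[of "k + 2"] by (simp add: rooted_add_5)
    moreover have "k + 6 - 1 = k + 5" "k + 6 - 2 = k + 4" by simp_all
    ultimately show ?thesis
      unfolding 3 by (metis (no_types, lifting))
  qed
qed

theorem lemma3p7:
  shows
   "(\<forall>n i j. 2 \<le> n \<longrightarrow> i \<le> j \<longrightarrow> j < length (rooted n) \<longrightarrow>
        n \<in># rooted n ! i \<longrightarrow> n \<in># rooted n ! j)
  \<and> (\<forall>n i j. 3 \<le> n \<longrightarrow> i \<le> j \<longrightarrow> j < length (rooted n) \<longrightarrow>
        n - 2 \<in># rooted n ! i \<longrightarrow> n - 2 \<in># rooted n ! j)
  \<and> (\<forall>n. 4 \<le> n \<longrightarrow> (\<exists>\<alpha> < length (rooted (n - 1)).
        rooted n = map (\<lambda>v. {#n - 1#} + v) (rooted (n - 2)) @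
                   map (\<lambda>w. {#n#} + w) (take \<alpha> (rooted (n - 1)))))"
  using sorted_rooted_last_var sorted_rooted_third_last_var rooted_eq_append_take
  unfolding sorted_map_bool_iff by blast

end
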